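(* Let $k\ge3$. Define the planar $2k$-terminal network $(G,c)$: non-terminal vertices $u_{i,j}$ for $1\le i,j\le k$ ($i$ the column, $j$ the row); terminals $v_1,\dots,v_k,h_1,\dots,h_k$, with $v_j$ adjacent only to $u_{1,j}$ and $h_i$ adjacent only to $u_{i,1}$; grid edges $u_{i,j}u_{i+1,j}$ ($1\le i\le k-1$, $1\le j\le k$) and $u_{i,j}u_{i,j+1}$ ($1\le i\le k$, $1\le j\le k-1$). Costs: every terminal edge costs $k^4$; each edge $u_{i,k}u_{i+1,k}$ and each edge $u_{k,j}u_{k,j+1}$ costs $k^4$; each edge $u_{i,j}u_{i+1,j}$ with $i,j\le k-1$ costs $1$; each edge $u_{i,j}u_{i,j+1}$ with $i,j\le k-1$ costs $1-\varepsilon_{i,j}$ where $\varepsilon_{i,j}=j/k^4$. For $1\le i,j\le k-1$ let $S_{i,j}=\{h_1,\dots,h_i,v_1,\dots,v_j\}$. Then for all $1\le i,j\le k-1$, the cut $(W,V(G)\setminus W)$ with $W=S_{i,j}\cup\{u_{\alpha,\beta}:1\le\alpha\le i,\,1\le\beta\le j\}$ is the unique minimum-cost $S_{i,j}$-separating cut of $(G,c)$, and its cost is $i+j-\sum_{\alpha=1}^{i}\varepsilon_{\alpha,j}$.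
   Context: The terminal set is $Q=\{v_1,\dots,v_k,h_1,\dots,h_k\}$. A cut $(W,V(G)\setminus W)$ is $S$-separating if $W\cap Q\in\{S,Q\setminus S\}$; its cost is the total cost of edges with exactly one endpoint in $W$. Unique means every other $S_{i,j}$-separating cut has strictly larger cost. *)

theory Defs
  imports Complex_Main
begin

text \<open>Vertices: U i j = u_{i,j} (i column, j row), Vt j = v_j, Ht i = h_i.\<close>
datatype vtx = U nat nat | Vt nat | Ht nat

definition verts :: "nat \<Rightarrow> vtx set" where
  "verts k = {U i j | i j. 1 \<le> i \<and> i \<le> k \<and> 1 \<le> j \<and> j \<le> k}
     \<union> {Vt j | j. 1 \<le> j \<and> j \<le> k} \<union> {Ht i | i. 1 \<le> i \<and> i \<le> k}"

definition terminals :: "nat \<Rightarrow> vtx set" where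
  "terminals k = {Vt j | j. 1 \<le> j \<and> j \<le> k} \<union> {Ht i | i. 1 \<le> i \<and> i \<le> k}"

text \<open>Each undirected edge is listed once, as an ordered pair.\<close>
definition edges :: "nat \<Rightarrow> (vtx \<times> vtx) set" where
  "edges k = {(Vt j, U 1 j) | j. 1 \<le> j \<and> j \<le> k}
     \<union> {(Ht i, U i 1) | i. 1 \<le> i \<and> i \<le> k}
     \<union> {(U i j, U (i+1) j) | i j. 1 \<le> i \<and> i \<le> k - 1 \<and> 1 \<le> j \<and> j \<le> k}
     \<union> {(U i j, U i (j+1)) | i j. 1 \<le> i \<and> i \<le> k \<and> 1 \<le> j \<and> j \<le> k - 1}"

definition eps :: "nat \<Rightarrow> nat \<Rightarrow> nat \<Rightarrow> real" where
  "eps k i j = real j / real k ^ 4"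

text \<open>Cost of an edge (only meaningful on members of edges k).\<close>
fun ecost :: "nat \<Rightarrow> vtx \<Rightarrow> vtx \<Rightarrow> real" where
  "ecost k (U i j) (U i' j') =
     (if i' = i + 1 \<and> j' = j then (if j = k then real k ^ 4 else 1)
      else if i' = i \<and> j' = j + 1 then (if i = k then real k ^ 4 else 1 - eps k i j)
      else 0)"
| "ecost k (Vt j) (U i' j') = real k ^ 4"
| "ecost k (Ht i) (U i' j') = real k ^ 4"
| "ecost k _ _ = 0"

definition cut_cost :: "nat \<Rightarrow> vtx set \<Rightarrow> real" where
  "cut_cost k W = (\<Sum>(a, b) \<in> {(a, b) \<in> edges k. (a \<in> W) \<noteq> (b \<in> W)}. ecost k a b)"

text \<open>W describes the cut (W, V(G) - W).\<close>
definition separating :: "nat \<Rightarrow> vtx set \<Rightarrow> vtx set \<Rightarrow> bool" where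
  "separating k S W \<longleftrightarrow> W \<subseteq> verts k \<and>
     (W \<inter> terminals k = S \<or> W \<inter> terminals k = terminals k - S)"

definition Sij :: "nat \<Rightarrow> nat \<Rightarrow> vtx set" where
  "Sij i j = {Ht a | a. 1 \<le> a \<and> a \<le> i} \<union> {Vt b | b. 1 \<le> b \<and> b \<le> j}"

end

theory Submission
  imports Defs
begin

text \<open>
  Call a cut light if it crosses no edge of cost k^4 (terminal edges, top row, rightmost
  column).  A cut that is not light costs at least k^4, more than i + j.  For a light cut Z
  with terminal part S_{i,j} the boundary of the grid is forced: the first column and first
  row follow the terminals and the top row and last column lie outside Z.  Hence each row
  1..j and each column 1..i contains a cut grid edge, and the cost equals the number N of cut
  grid edges minus the discounts eps = b/k^4 of the cut vertical edges.  If N > i + j the tiny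
  discounts cannot pay for the extra edge.  If N = i + j, every other row and column is uncut,
  so Z lies inside the corner block, each column a \<le> i is cut exactly once at height at most
  j, and the discounts total at most i j/k^4 -- strictly less unless Z is the corner cut.
\<close>

definition differ :: "bool \<Rightarrow> bool \<Rightarrow> real" where
  "differ p q = (if p = q then 0 else 1)"

lemma differ_nonneg [simp]: "differ p q \<ge> 0"
  and differ_Ints [simp]: "differ p q \<in> \<int>"
  and differ_same [simp]: "differ p p = 0"
  by (auto simp: differ_def)

definition changes :: "(nat \<Rightarrow> bool) \<Rightarrow> nat \<Rightarrow> nat \<Rightarrow> real" where
  "changes P m n = (\<Sum>a\<in>{m..<n}. differ (P a) (P (Suc a)))"

lemma changes_nonneg: "changes P m n \<ge> 0"
  unfolding changes_def by (intro sum_nonneg) simp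

lemma changes_Ints: "changes P m n \<in> \<int>"
  unfolding changes_def by (intro Ints_sum) simp

lemma changes_split:
  assumes "m \<le> c" "c \<le> n"
  shows "changes P m n = changes P m c + changes P c n"
  unfolding changes_def using sum.atLeastLessThan_concat[OF assms] by metis

lemma changes_ge_one:
  assumes "m \<le> c" "P c \<noteq> P m"
  shows "changes P m c \<ge> 1"
  using assms
proof (induction c)
  case 0 thus ?case by simp
next
  case (Suc c)
  hence "m \<le> c" by (cases "m = Suc c") auto
  hence step: "changes P m (Suc c) = changes P m c + differ (P c) (P (Suc c))"
    unfolding changes_def by simp
  show ?case
  proof (cases "P c = P m")
    case True
    thus ?thesis using step Suc.prems changes_nonneg[of P m c] by (simp add: differ_def)
  next
    case False
    thus ?thesis using step Suc.IH[OF \<open>m \<le> c\<close>] differ_nonneg[of "P c" "P (Suc c)"] by linarith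
  qed
qed

lemma changes_zero_const:
  assumes "changes P m n = 0" "m \<le> c" "c \<le> n"
  shows "P c = P m"
proof (rule ccontr)
  assume "P c \<noteq> P m"
  with assms(2) have "changes P m c \<ge> 1" by (rule changes_ge_one)
  thus False using assms changes_split[of m c n P] changes_nonneg[of P c n] by linarith
qed

lemma changes_const:
  assumes "\<And>a. a \<in> {m..<n} \<Longrightarrow> P (Suc a) = P a"
  shows "changes P m n = 0"
  unfolding changes_def using assms by simp

lemma changes_threshold:
  assumes "m \<le> c" "c < n" "\<And>a. a \<in> {m..n} \<Longrightarrow> P a = (a \<le> c)"
  shows "changes P m n = 1"
proof -
  have "changes P m n = (\<Sum>a\<in>{m..<n}. if a = c then 1 else 0)"
    unfolding changes_def using assms(3) by (intro sum.cong) (auto simp: differ_def)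
  thus ?thesis using assms(1,2) by simp
qed

lemma sum_ge_card:
  assumes "finite A" "B \<subseteq> A" "\<And>x. x \<in> B \<Longrightarrow> f x \<ge> 1" "\<And>x. x \<in> A \<Longrightarrow> f x \<ge> (0::real)"
  shows "sum f A \<ge> card B"
proof -
  have "real (card B) = (\<Sum>x\<in>B. 1)" by simp
  also have "\<dots> \<le> sum f B" using assms(3) by (rule sum_mono)
  also have "\<dots> \<le> sum f A" using assms by (intro sum_mono2) auto
  finally show ?thesis .
qed

lemma sum_le_card_tight:
  assumes "finite A" "B \<subseteq> A" "\<And>x. x \<in> B \<Longrightarrow> f x \<ge> 1" "\<And>x. x \<in> A \<Longrightarrow> f x \<ge> (0::real)"
    and "sum f A \<le> card B"
  shows "\<And>x. x \<in> B \<Longrightarrow> f x = 1" and "\<And>x. x \<in> A - B \<Longrightarrow> f x = 0"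
proof -
  have fin: "finite B" "finite (A - B)" using assms(1,2) finite_subset by auto
  have split: "sum f A = sum f B + sum f (A - B)"
    using sum.subset_diff[OF assms(2,1), of f] by simp
  have on_B: "sum f B \<ge> card B"
    using sum_ge_card[OF fin(1) order.refl, of f] assms(2-4) by blast
  have rest: "sum f (A - B) \<ge> 0" using assms(4) by (intro sum_nonneg) auto
  have "sum f (A - B) = 0" using split on_B rest assms(5) by linarith
  thus "x \<in> A - B \<Longrightarrow> f x = 0" for x
    using sum_nonneg_eq_0_iff[OF fin(2), of f] assms(4) by blast
  have "(\<Sum>x\<in>B. f x - 1) = sum f B - card B" by (simp add: sum_subtractf)
  hence "(\<Sum>x\<in>B. f x - 1) = 0" using split on_B rest assms(5) by linarith
  thus "x \<in> B \<Longrightarrow> f x = 1" for x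
    using sum_nonneg_eq_0_iff[OF fin(1), of "\<lambda>x. f x - 1"] assms(3) by fastforce
qed

lemma edges_as_images:
  assumes "k \<ge> 1"
  shows "edges k = (\<lambda>b. (Vt b, U 1 b)) ` {1..k} \<union> (\<lambda>a. (Ht a, U a 1)) ` {1..k}
    \<union> (\<lambda>(a, b). (U a b, U (Suc a) b)) ` ({1..<k} \<times> {1..k})
    \<union> (\<lambda>(a, b). (U a b, U a (Suc b))) ` ({1..k} \<times> {1..<k})"
  using assms unfolding edges_def by (auto simp: image_iff)

lemma finite_edges: "finite (edges k)"
proof (cases "k \<ge> 1")
  case True thus ?thesis by (simp add: edges_as_images)
next
  case False thus ?thesis unfolding edges_def by auto
qed

lemma edges_in_verts: "(a, b) \<in> edges k \<Longrightarrow> a \<in> verts k \<and> b \<in> verts k"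
  unfolding edges_def verts_def by auto

lemma ecost_nonneg:
  assumes "(a, b) \<in> edges k"
  shows "ecost k a b \<ge> 0"
proof -
  have "eps k i j \<le> 1" if "j \<le> k" "1 \<le> k" for i j
  proof -
    have "real j \<le> real k ^ 1" using that by simp
    also have "\<dots> \<le> real k ^ 4" using that by (intro power_increasing) auto
    finally show ?thesis using that unfolding eps_def by (simp add: divide_le_eq_1)
  qed
  thus ?thesis using assms unfolding edges_def by auto
qed

lemma cut_cost_as_sum:
  "cut_cost k Z = (\<Sum>(a, b)\<in>edges k. differ (a \<in> Z) (b \<in> Z) * ecost k a b)"
proof -
  have "cut_cost k Z = (\<Sum>e\<in>edges k. if (fst e \<in> Z) \<noteq> (snd e \<in> Z) then ecost k (fst e) (snd e) else 0)"
    unfolding cut_cost_def using finite_edges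
    by (subst sum.inter_filter[symmetric]) (auto simp: case_prod_beta' intro!: sum.cong)
  thus ?thesis by (auto simp: case_prod_beta' differ_def intro!: sum.cong)
qed

lemma cut_cost_ge_edge:
  assumes "(a, b) \<in> edges k" "(a \<in> Z) \<noteq> (b \<in> Z)"
  shows "cut_cost k Z \<ge> ecost k a b"
proof -
  have "differ (a \<in> Z) (b \<in> Z) * ecost k a b \<le> (\<Sum>(a, b)\<in>edges k. differ (a \<in> Z) (b \<in> Z) * ecost k a b)"
    using member_le_sum[OF assms(1), of "\<lambda>(a, b). differ (a \<in> Z) (b \<in> Z) * ecost k a b"]
      finite_edges ecost_nonneg by auto
  thus ?thesis using assms(2) by (simp add: cut_cost_as_sum differ_def)
qed

lemma cut_cost_compl: "cut_cost k (verts k - Z) = cut_cost k Z"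
proof -
  have "{(a, b) \<in> edges k. (a \<in> verts k - Z) \<noteq> (b \<in> verts k - Z)}
      = {(a, b) \<in> edges k. (a \<in> Z) \<noteq> (b \<in> Z)}"
    using edges_in_verts by blast
  thus ?thesis unfolding cut_cost_def by simp
qed

lemma cut_cost_by_families:
  assumes "k \<ge> 1"
  shows "cut_cost k Z =
      (\<Sum>b\<in>{1..k}. differ (Vt b \<in> Z) (U 1 b \<in> Z) * real k ^ 4)
    + (\<Sum>a\<in>{1..k}. differ (Ht a \<in> Z) (U a 1 \<in> Z) * real k ^ 4)
    + (\<Sum>(a, b)\<in>{1..<k} \<times> {1..k}. differ (U a b \<in> Z) (U (Suc a) b \<in> Z)
         * (if b = k then real k ^ 4 else 1))
    + (\<Sum>(a, b)\<in>{1..k} \<times> {1..<k}. differ (U a b \<in> Z) (U a (Suc b) \<in> Z)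
         * (if a = k then real k ^ 4 else 1 - eps k a b))"
proof -
  let ?f = "\<lambda>(a, b). differ (a \<in> Z) (b \<in> Z) * ecost k a b"
  let ?E1 = "(\<lambda>b. (Vt b, U 1 b)) ` {1..k}" and ?E2 = "(\<lambda>a. (Ht a, U a 1)) ` {1..k}"
  let ?E3 = "(\<lambda>(a, b). (U a b, U (Suc a) b)) ` ({1..<k} \<times> {1..k})"
  let ?E4 = "(\<lambda>(a, b). (U a b, U a (Suc b))) ` ({1..k} \<times> {1..<k})"
  have "cut_cost k Z = sum ?f (?E1 \<union> ?E2 \<union> ?E3 \<union> ?E4)"
    by (simp add: cut_cost_as_sum edges_as_images[OF assms])
  also have "\<dots> = sum ?f ?E1 + sum ?f ?E2 + sum ?f ?E3 + sum ?f ?E4"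
    by (subst sum.union_disjoint, force, force, force)+ auto
  also have "sum ?f ?E1 = (\<Sum>b\<in>{1..k}. differ (Vt b \<in> Z) (U 1 b \<in> Z) * real k ^ 4)"
    by (subst sum.reindex) (auto simp: inj_on_def)
  also have "sum ?f ?E2 = (\<Sum>a\<in>{1..k}. differ (Ht a \<in> Z) (U a 1 \<in> Z) * real k ^ 4)"
    by (subst sum.reindex) (auto simp: inj_on_def)
  also have "sum ?f ?E3 = (\<Sum>(a, b)\<in>{1..<k} \<times> {1..k}. differ (U a b \<in> Z) (U (Suc a) b \<in> Z)
         * (if b = k then real k ^ 4 else 1))"
    by (subst sum.reindex) (auto simp: inj_on_def intro!: sum.cong)
  also have "sum ?f ?E4 = (\<Sum>(a, b)\<in>{1..k} \<times> {1..<k}. differ (U a b \<in> Z) (U a (Suc b) \<in> Z)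
         * (if a = k then real k ^ 4 else 1 - eps k a b))"
    by (subst sum.reindex) (auto simp: inj_on_def intro!: sum.cong)
  finally show ?thesis .
qed

definition light :: "nat \<Rightarrow> vtx set \<Rightarrow> bool" where
  "light k Z \<longleftrightarrow>
     (\<forall>b\<in>{1..k}. (Vt b \<in> Z) = (U 1 b \<in> Z)) \<and> (\<forall>a\<in>{1..k}. (Ht a \<in> Z) = (U a 1 \<in> Z)) \<and>
     (\<forall>a\<in>{1..<k}. (U a k \<in> Z) = (U (Suc a) k \<in> Z)) \<and>
     (\<forall>b\<in>{1..<k}. (U k b \<in> Z) = (U k (Suc b) \<in> Z))"

lemma heavy_cut_cost:
  assumes "\<not> light k Z"
  shows "cut_cost k Z \<ge> real k ^ 4"
proof -
  obtain a b where "(a, b) \<in> edges k" "(a \<in> Z) \<noteq> (b \<in> Z)" "ecost k a b = real k ^ 4"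
  proof -
    consider (v) b where "b \<in> {1..k}" "(Vt b \<in> Z) \<noteq> (U 1 b \<in> Z)"
      | (h) a where "a \<in> {1..k}" "(Ht a \<in> Z) \<noteq> (U a 1 \<in> Z)"
      | (top) a where "a \<in> {1..<k}" "(U a k \<in> Z) \<noteq> (U (Suc a) k \<in> Z)"
      | (right) b where "b \<in> {1..<k}" "(U k b \<in> Z) \<noteq> (U k (Suc b) \<in> Z)"
      using assms unfolding light_def by blast
    thus ?thesis
    proof cases
      case (v b)
      hence "(Vt b, U 1 b) \<in> edges k" unfolding edges_def by auto
      thus ?thesis using that v by simp
    next
      case (h a)
      hence "(Ht a, U a 1) \<in> edges k" unfolding edges_def by auto
      thus ?thesis using that h by simp
    next
      case (top a)
      hence "(U a k, U (a + 1) k) \<in> edges k" unfolding edges_def by force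
      thus ?thesis using that top by simp
    next
      case (right b)
      hence "(U k b, U k (b + 1)) \<in> edges k" unfolding edges_def by force
      thus ?thesis using that right by simp
    qed
  qed
  thus ?thesis using cut_cost_ge_edge by metis
qed

definition row_cuts :: "nat \<Rightarrow> vtx set \<Rightarrow> nat \<Rightarrow> real" where
  "row_cuts k Z b = changes (\<lambda>a. U a b \<in> Z) 1 k"

definition col_cuts :: "nat \<Rightarrow> vtx set \<Rightarrow> nat \<Rightarrow> real" where
  "col_cuts k Z a = changes (\<lambda>b. U a b \<in> Z) 1 k"

definition discount :: "nat \<Rightarrow> vtx set \<Rightarrow> nat \<Rightarrow> real" where
  "discount k Z a = (\<Sum>b\<in>{1..<k}. differ (U a b \<in> Z) (U a (Suc b) \<in> Z) * eps k a b)"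

lemma light_cut_cost:
  assumes "light k Z" "k \<ge> 1"
  shows "cut_cost k Z = (\<Sum>b\<in>{1..<k}. row_cuts k Z b) + (\<Sum>a\<in>{1..<k}. col_cuts k Z a - discount k Z a)"
proof -
  have ins: "{1..k} = insert k {1..<k}" using assms(2) by auto
  have lt: "\<forall>a\<in>{1..<k}. (U a k \<in> Z) = (U (Suc a) k \<in> Z)" "\<forall>b\<in>{1..<k}. (U k b \<in> Z) = (U k (Suc b) \<in> Z)"
    using assms(1) unfolding light_def by auto
  have horizontal: "(\<Sum>(a, b)\<in>{1..<k} \<times> {1..k}. differ (U a b \<in> Z) (U (Suc a) b \<in> Z)
         * (if b = k then real k ^ 4 else 1)) = (\<Sum>b\<in>{1..<k}. row_cuts k Z b)"
  proof -
    have "(\<Sum>(a, b)\<in>{1..<k} \<times> {1..k}. differ (U a b \<in> Z) (U (Suc a) b \<in> Z)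
         * (if b = k then real k ^ 4 else 1))
       = (\<Sum>a\<in>{1..<k}. \<Sum>b\<in>insert k {1..<k}. differ (U a b \<in> Z) (U (Suc a) b \<in> Z)
         * (if b = k then real k ^ 4 else 1))"
      unfolding ins by (rule sum.cartesian_product[symmetric])
    also have "\<dots> = (\<Sum>a\<in>{1..<k}. \<Sum>b\<in>{1..<k}. differ (U a b \<in> Z) (U (Suc a) b \<in> Z))"
      using lt(1) by (intro sum.cong[OF refl]) (auto simp: sum.insert intro!: sum.cong)
    also have "\<dots> = (\<Sum>b\<in>{1..<k}. row_cuts k Z b)"
      unfolding row_cuts_def changes_def by (rule sum.swap)
    finally show ?thesis .
  qed
  have vertical: "(\<Sum>(a, b)\<in>{1..k} \<times> {1..<k}. differ (U a b \<in> Z) (U a (Suc b) \<in> Z)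
         * (if a = k then real k ^ 4 else 1 - eps k a b))
       = (\<Sum>a\<in>{1..<k}. col_cuts k Z a - discount k Z a)"
  proof -
    have "(\<Sum>(a, b)\<in>{1..k} \<times> {1..<k}. differ (U a b \<in> Z) (U a (Suc b) \<in> Z)
         * (if a = k then real k ^ 4 else 1 - eps k a b))
       = (\<Sum>a\<in>insert k {1..<k}. \<Sum>b\<in>{1..<k}. differ (U a b \<in> Z) (U a (Suc b) \<in> Z)
         * (if a = k then real k ^ 4 else 1 - eps k a b))"
      unfolding ins by (rule sum.cartesian_product[symmetric])
    also have "\<dots> = (\<Sum>a\<in>{1..<k}. \<Sum>b\<in>{1..<k}. differ (U a b \<in> Z) (U a (Suc b) \<in> Z) * (1 - eps k a b))"
      using lt(2) by (simp add: sum.insert)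
    also have "\<dots> = (\<Sum>a\<in>{1..<k}. col_cuts k Z a - discount k Z a)"
      unfolding col_cuts_def discount_def changes_def
      by (simp add: right_diff_distrib sum_subtractf)
    finally show ?thesis .
  qed
  show ?thesis
    using assms(1) unfolding cut_cost_by_families[OF assms(2)] horizontal vertical light_def
    by simp
qed

lemma discount_le:
  assumes "\<And>b. b \<in> {1..<k} \<Longrightarrow> (U a b \<in> Z) \<noteq> (U a (Suc b) \<in> Z) \<Longrightarrow> b \<le> t"
  shows "discount k Z a \<le> real t / real k ^ 4 * col_cuts k Z a"
proof -
  have "discount k Z a \<le> (\<Sum>b\<in>{1..<k}. differ (U a b \<in> Z) (U a (Suc b) \<in> Z) * (real t / real k ^ 4))"
    unfolding discount_def
  proof (rule sum_mono)
    fix b assume "b \<in> {1..<k}"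
    thus "differ (U a b \<in> Z) (U a (Suc b) \<in> Z) * eps k a b
        \<le> differ (U a b \<in> Z) (U a (Suc b) \<in> Z) * (real t / real k ^ 4)"
      using assms[of b] by (auto simp: differ_def eps_def divide_right_mono)
  qed
  thus ?thesis unfolding col_cuts_def changes_def by (simp add: sum_distrib_left mult.commute)
qed

lemma light_cut_cost_ge_count:
  assumes "light k Z" "k \<ge> 1"
  shows "cut_cost k Z \<ge> (1 - (real k - 1) / real k ^ 4)
    * ((\<Sum>b\<in>{1..<k}. row_cuts k Z b) + (\<Sum>a\<in>{1..<k}. col_cuts k Z a))"
proof -
  define q where "q = (real k - 1) / real k ^ 4"
  have q: "q \<ge> 0" using assms(2) unfolding q_def by simp
  have "discount k Z a \<le> q * col_cuts k Z a" for a
  proof -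
    have "discount k Z a \<le> real (k - 1) / real k ^ 4 * col_cuts k Z a"
      by (rule discount_le) auto
    thus ?thesis using assms(2) unfolding q_def by (simp add: of_nat_diff)
  qed
  hence "(\<Sum>a\<in>{1..<k}. col_cuts k Z a - discount k Z a) \<ge> (1 - q) * (\<Sum>a\<in>{1..<k}. col_cuts k Z a)"
    by (simp add: sum_distrib_left sum_mono left_diff_distrib)
  moreover have "q * (\<Sum>b\<in>{1..<k}. row_cuts k Z b) \<ge> 0"
    using q by (simp add: sum_nonneg row_cuts_def changes_nonneg)
  ultimately show ?thesis
    unfolding light_cut_cost[OF assms] q_def[symmetric] by (simp add: algebra_simps)
qed

text \<open>Numerical facts for k \<ge> 3: the heavy weight k^4 exceeds i + j, and one additional cut
  grid edge outweighs all possible discounts.\<close>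
lemma weight_bounds:
  assumes "k \<ge> 3" "i < k" "j < k"
  shows "real i + real j < real k ^ 4"
    and "(real i + real j + 1) * (1 - (real k - 1) / real k ^ 4) > real i + real j"
proof -
  have sq: "real k * real k \<ge> 9" using assms(1) mult_mono[of 3 "real k" 3 "real k"] by simp
  have K: "real k ^ 4 = (real k * real k) * (real k * real k)" by (simp add: power4_eq_xxxx)
  have "(real i + real j + 1) * (real k - 1) \<le> (2 * real k) * real k"
    using assms by (intro mult_mono) auto
  also have "\<dots> = 2 * (real k * real k)" by simp
  also have "\<dots> < (real k * real k) * (real k * real k)"
    using sq by (intro mult_strict_right_mono) auto
  also have "\<dots> = real k ^ 4" unfolding K ..
  finally have main: "(real i + real j + 1) * (real k - 1) < real k ^ 4" .
  have "real i + real j + 1 \<le> (real i + real j + 1) * (real k - 1)"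
    using assms by (intro mult_le_cancel_left1[THEN iffD2]) auto
  thus "real i + real j < real k ^ 4" using main by linarith
  show "(real i + real j + 1) * (1 - (real k - 1) / real k ^ 4) > real i + real j"
    using main assms by (simp add: field_simps)
qed

definition corner_cut :: "nat \<Rightarrow> nat \<Rightarrow> vtx set" where
  "corner_cut i j = Sij i j \<union> {U \<alpha> \<beta> | \<alpha> \<beta>. 1 \<le> \<alpha> \<and> \<alpha> \<le> i \<and> 1 \<le> \<beta> \<and> \<beta> \<le> j}"

lemma corner_cut_iff [simp]:
  "U a b \<in> corner_cut i j \<longleftrightarrow> 1 \<le> a \<and> a \<le> i \<and> 1 \<le> b \<and> b \<le> j"
  "Vt b \<in> corner_cut i j \<longleftrightarrow> 1 \<le> b \<and> b \<le> j"
  "Ht a \<in> corner_cut i j \<longleftrightarrow> 1 \<le> a \<and> a \<le> i"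
  unfolding corner_cut_def Sij_def by auto

lemma corner_cut_separating:
  assumes "i < k" "j < k"
  shows "corner_cut i j \<subseteq> verts k" "corner_cut i j \<inter> terminals k = Sij i j"
  using assms unfolding corner_cut_def Sij_def verts_def terminals_def by auto

text \<open>The corner cut is light and cuts row b once for b \<le> j and column a once (at height j)
  for a \<le> i, so its cost is i + j - i j/k^4.\<close>
lemma corner_cut_cost:
  assumes "1 \<le> i" "i < k" "1 \<le> j" "j < k"
  shows "cut_cost k (corner_cut i j) = real i + real j - real i * real j / real k ^ 4"
proof -
  let ?W = "corner_cut i j"
  have light: "light k ?W" using assms unfolding light_def by auto
  have rows: "row_cuts k ?W b = of_bool (b \<le> j)" if "b \<in> {1..<k}" for b
    using that assms unfolding row_cuts_def
    by (cases "b \<le> j") (auto intro: changes_threshold changes_const)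
  have cols: "col_cuts k ?W a = of_bool (a \<le> i)" if "a \<in> {1..<k}" for a
    using that assms unfolding col_cuts_def
    by (cases "a \<le> i") (auto intro: changes_threshold changes_const)
  have discounts: "discount k ?W a = of_bool (a \<le> i) * (real j / real k ^ 4)" if "a \<in> {1..<k}" for a
  proof -
    have "discount k ?W a = (\<Sum>b\<in>{1..<k}. if b = j then of_bool (a \<le> i) * eps k a j else 0)"
      unfolding discount_def using that assms by (intro sum.cong) (auto simp: differ_def)
    thus ?thesis using assms by (simp add: eps_def)
  qed
  have count: "{1..<k} \<inter> {x. x \<le> n} = {1..n}" if "n < k" for n
    using that by auto
  have "(\<Sum>a\<in>{1..<k}. col_cuts k ?W a - discount k ?W a)
      = (\<Sum>a\<in>{1..<k}. of_bool (a \<le> i) * (1 - real j / real k ^ 4))"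
    by (intro sum.cong refl) (simp add: cols discounts)
  also have "\<dots> = real i * (1 - real j / real k ^ 4)"
    using count[of i] assms by simp
  finally have columns: "(\<Sum>a\<in>{1..<k}. col_cuts k ?W a - discount k ?W a)
      = real i * (1 - real j / real k ^ 4)" .
  have rows_total: "(\<Sum>b\<in>{1..<k}. row_cuts k ?W b) = real j"
    using count[of j] assms by (simp add: rows)
  have "k \<ge> 1" using assms by simp
  thus ?thesis
    unfolding light_cut_cost[OF light \<open>k \<ge> 1\<close>] columns rows_total by (simp add: algebra_simps)
qed

context
  fixes k i j :: nat and Z :: "vtx set"
  assumes k3: "k \<ge> 3" and i_bounds: "1 \<le> i" "i < k" and j_bounds: "1 \<le> j" "j < k"
    and Z_verts: "Z \<subseteq> verts k" and Z_terminals: "Z \<inter> terminals k = Sij i j"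
    and Z_light: "light k Z"
begin

lemma first_column: "b \<in> {1..k} \<Longrightarrow> U 1 b \<in> Z \<longleftrightarrow> b \<le> j"
proof -
  assume b: "b \<in> {1..k}"
  have "Vt b \<in> terminals k" using b unfolding terminals_def by auto
  hence "Vt b \<in> Z \<longleftrightarrow> Vt b \<in> Sij i j" using Z_terminals by blast
  moreover have "(Vt b \<in> Z) = (U 1 b \<in> Z)" using Z_light b unfolding light_def by blast
  ultimately show ?thesis using b unfolding Sij_def by auto
qed

lemma first_row: "a \<in> {1..k} \<Longrightarrow> U a 1 \<in> Z \<longleftrightarrow> a \<le> i"
proof -
  assume a: "a \<in> {1..k}"
  have "Ht a \<in> terminals k" using a unfolding terminals_def by auto
  hence "Ht a \<in> Z \<longleftrightarrow> Ht a \<in> Sij i j" using Z_terminals by blast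
  moreover have "(Ht a \<in> Z) = (U a 1 \<in> Z)" using Z_light a unfolding light_def by blast
  ultimately show ?thesis using a unfolding Sij_def by auto
qed

lemma top_row: "a \<in> {1..k} \<Longrightarrow> U a k \<notin> Z"
proof -
  assume a: "a \<in> {1..k}"
  have "changes (\<lambda>a. U a k \<in> Z) 1 k = 0"
    using Z_light unfolding light_def by (intro changes_const) auto
  hence "(U a k \<in> Z) = (U 1 k \<in> Z)" using a by (intro changes_zero_const) auto
  thus ?thesis using first_column[of k] j_bounds by auto
qed

lemma right_column: "b \<in> {1..k} \<Longrightarrow> U k b \<notin> Z"
proof -
  assume b: "b \<in> {1..k}"
  have "changes (\<lambda>b. U k b \<in> Z) 1 k = 0"
    using Z_light unfolding light_def by (intro changes_const) auto
  hence "(U k b \<in> Z) = (U k 1 \<in> Z)" using b by (intro changes_zero_const) auto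
  thus ?thesis using first_row[of k] i_bounds by auto
qed

lemma row_cut_ge_one: "b \<in> {1..j} \<Longrightarrow> row_cuts k Z b \<ge> 1"
  unfolding row_cuts_def using j_bounds first_column[of b] right_column[of b]
  by (intro changes_ge_one) auto

lemma col_cut_ge_one: "a \<in> {1..i} \<Longrightarrow> col_cuts k Z a \<ge> 1"
  unfolding col_cuts_def using i_bounds first_row[of a] top_row[of a]
  by (intro changes_ge_one) auto

lemma cut_counts_ge: "(\<Sum>b\<in>{1..<k}. row_cuts k Z b) \<ge> j" "(\<Sum>a\<in>{1..<k}. col_cuts k Z a) \<ge> i"
proof -
  have "(\<Sum>b\<in>{1..<k}. row_cuts k Z b) \<ge> card {1..j}"
    by (rule sum_ge_card) (use j_bounds row_cut_ge_one in \<open>auto simp: row_cuts_def changes_nonneg\<close>)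
  thus "(\<Sum>b\<in>{1..<k}. row_cuts k Z b) \<ge> j" by simp
  have "(\<Sum>a\<in>{1..<k}. col_cuts k Z a) \<ge> card {1..i}"
    by (rule sum_ge_card) (use i_bounds col_cut_ge_one in \<open>auto simp: col_cuts_def changes_nonneg\<close>)
  thus "(\<Sum>a\<in>{1..<k}. col_cuts k Z a) \<ge> i" by simp
qed

lemma tight_cuts:
  assumes tight: "(\<Sum>b\<in>{1..<k}. row_cuts k Z b) + (\<Sum>a\<in>{1..<k}. col_cuts k Z a) \<le> i + j"
  shows "b \<in> {Suc j..<k} \<Longrightarrow> row_cuts k Z b = 0"
    and "a \<in> {1..i} \<Longrightarrow> col_cuts k Z a = 1"
    and "a \<in> {Suc i..<k} \<Longrightarrow> col_cuts k Z a = 0"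
proof -
  have rows: "(\<Sum>b\<in>{1..<k}. row_cuts k Z b) \<le> card {1..j}"
    and cols: "(\<Sum>a\<in>{1..<k}. col_cuts k Z a) \<le> card {1..i}"
    using tight cut_counts_ge by auto
  have sub: "{1..j} \<subseteq> {1..<k}" "{1..i} \<subseteq> {1..<k}" using i_bounds j_bounds by auto
  have diff: "{1..<k} - {1..j} = {Suc j..<k}" "{1..<k} - {1..i} = {Suc i..<k}" by auto
  have nonneg: "row_cuts k Z b \<ge> 0" "col_cuts k Z b \<ge> 0" for b
    by (simp_all add: row_cuts_def col_cuts_def changes_nonneg)
  show "b \<in> {Suc j..<k} \<Longrightarrow> row_cuts k Z b = 0"
    using sum_le_card_tight(2)[OF _ sub(1) row_cut_ge_one nonneg(1) rows] diff by simp
  show "a \<in> {1..i} \<Longrightarrow> col_cuts k Z a = 1"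
    using sum_le_card_tight(1)[OF _ sub(2) col_cut_ge_one nonneg(2) cols] by simp
  show "a \<in> {Suc i..<k} \<Longrightarrow> col_cuts k Z a = 0"
    using sum_le_card_tight(2)[OF _ sub(2) col_cut_ge_one nonneg(2) cols] diff by simp
qed

lemma tight_in_block:
  assumes tight: "(\<Sum>b\<in>{1..<k}. row_cuts k Z b) + (\<Sum>a\<in>{1..<k}. col_cuts k Z a) \<le> i + j"
    and in_Z: "U a b \<in> Z"
  shows "U a b \<in> corner_cut i j"
proof -
  have bounds: "a \<in> {1..k}" "b \<in> {1..k}" using in_Z Z_verts unfolding verts_def by auto
  have "b \<le> j"
  proof (rule ccontr)
    assume "\<not> b \<le> j"
    moreover have "b \<noteq> k" using top_row[OF bounds(1)] in_Z by auto
    ultimately have "row_cuts k Z b = 0" using tight_cuts(1)[OF tight] bounds by auto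
    hence "(U a b \<in> Z) = (U 1 b \<in> Z)"
      unfolding row_cuts_def using bounds by (intro changes_zero_const) auto
    thus False using in_Z first_column[OF bounds(2)] \<open>\<not> b \<le> j\<close> by simp
  qed
  moreover have "a \<le> i"
  proof (rule ccontr)
    assume "\<not> a \<le> i"
    moreover have "a \<noteq> k" using right_column[OF bounds(2)] in_Z by auto
    ultimately have "col_cuts k Z a = 0" using tight_cuts(3)[OF tight] bounds by auto
    hence "(U a b \<in> Z) = (U a 1 \<in> Z)"
      unfolding col_cuts_def using bounds by (intro changes_zero_const) auto
    thus False using in_Z first_row[OF bounds(1)] \<open>\<not> a \<le> i\<close> by simp
  qed
  ultimately show ?thesis using bounds by simp
qed

text \<open>In the tight case a column a \<le> i is cut exactly once; if U a beta lies outside Z, that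
  single cut lies below height beta, so the column's discount is at most (beta - 1)/k^4.\<close>
lemma tight_discount_le:
  assumes tight: "(\<Sum>b\<in>{1..<k}. row_cuts k Z b) + (\<Sum>a\<in>{1..<k}. col_cuts k Z a) \<le> i + j"
    and a: "a \<in> {1..i}" and \<beta>: "\<beta> \<in> {1..k}" and out: "U a \<beta> \<notin> Z"
  shows "discount k Z a \<le> (real \<beta> - 1) / real k ^ 4"
proof -
  let ?P = "\<lambda>b. U a b \<in> Z"
  have "?P 1" using first_row[of a] a i_bounds by auto
  hence below: "changes ?P 1 \<beta> \<ge> 1" using \<beta> out by (intro changes_ge_one) auto
  have one: "changes ?P 1 k = 1" using tight_cuts(2)[OF tight a] unfolding col_cuts_def .
  have "changes ?P \<beta> k = 0"
    using one below changes_split[of 1 \<beta> k ?P] changes_nonneg[of ?P \<beta> k] \<beta> by auto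
  hence no_cut_above: "?P b = ?P \<beta>" if "b \<in> {\<beta>..k}" for b
    using that by (intro changes_zero_const) auto
  have "discount k Z a \<le> real (\<beta> - 1) / real k ^ 4 * col_cuts k Z a"
  proof (rule discount_le)
    fix b assume "b \<in> {1..<k}" "(U a b \<in> Z) \<noteq> (U a (Suc b) \<in> Z)"
    thus "b \<le> \<beta> - 1" using no_cut_above[of b] no_cut_above[of "Suc b"] by fastforce
  qed
  thus ?thesis using tight_cuts(2)[OF tight a] \<beta> by simp
qed

lemma tight_missing_vertex:
  assumes tight: "(\<Sum>b\<in>{1..<k}. row_cuts k Z b) + (\<Sum>a\<in>{1..<k}. col_cuts k Z a) \<le> i + j"
    and "Z \<noteq> corner_cut i j"
  obtains \<alpha> \<beta> where "\<alpha> \<in> {1..i}" "\<beta> \<in> {1..j}" "U \<alpha> \<beta> \<notin> Z"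
proof -
  obtain x where x: "(x \<in> Z) \<noteq> (x \<in> corner_cut i j)" using assms(2) by blast
  have "x \<in> verts k" using x Z_verts corner_cut_separating(1) i_bounds j_bounds by blast
  moreover have "x \<notin> terminals k"
    using x Z_terminals corner_cut_separating(2) i_bounds j_bounds by blast
  ultimately obtain \<alpha> \<beta> where x_eq: "x = U \<alpha> \<beta>"
    unfolding verts_def terminals_def by blast
  have "U \<alpha> \<beta> \<notin> Z" using x tight_in_block[OF tight] unfolding x_eq by auto
  moreover have "\<alpha> \<in> {1..i}" "\<beta> \<in> {1..j}" using x \<open>U \<alpha> \<beta> \<notin> Z\<close> unfolding x_eq by auto
  ultimately show ?thesis using that by blast
qed

lemma tight_discount_sum:
  assumes tight: "(\<Sum>b\<in>{1..<k}. row_cuts k Z b) + (\<Sum>a\<in>{1..<k}. col_cuts k Z a) \<le> i + j"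
  shows "(\<Sum>a\<in>{1..<k}. discount k Z a) \<le> real i * real j / real k ^ 4"
    and "Z \<noteq> corner_cut i j \<Longrightarrow> (\<Sum>a\<in>{1..<k}. discount k Z a) < real i * real j / real k ^ 4"
proof -
  define g where "g a = (if a \<le> i then real j / real k ^ 4 else 0)" for a
  have "sum g {1..<k} = (\<Sum>a\<in>{a \<in> {1..<k}. a \<le> i}. real j / real k ^ 4)"
    unfolding g_def by (rule sum.inter_filter[symmetric]) simp
  also have "{a \<in> {1..<k}. a \<le> i} = {1..i}" using i_bounds by auto
  finally have g_sum: "sum g {1..<k} = real i * real j / real k ^ 4" by simp
  have le_g: "discount k Z a \<le> g a" if a: "a \<in> {1..<k}" for a
  proof (cases "a \<le> i")
    case True
    have "U a (Suc j) \<notin> Z" using tight_in_block[OF tight, of a "Suc j"] by auto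
    hence "discount k Z a \<le> (real (Suc j) - 1) / real k ^ 4"
      using True a j_bounds by (intro tight_discount_le[OF tight]) auto
    thus ?thesis using True unfolding g_def by simp
  next
    case False
    have "discount k Z a \<le> real (k - 1) / real k ^ 4 * col_cuts k Z a"
      by (rule discount_le) auto
    thus ?thesis using False a tight_cuts(3)[OF tight, of a] unfolding g_def by simp
  qed
  show "(\<Sum>a\<in>{1..<k}. discount k Z a) \<le> real i * real j / real k ^ 4"
    unfolding g_sum[symmetric] using le_g by (rule sum_mono)
  assume "Z \<noteq> corner_cut i j"
  then obtain \<alpha> \<beta> where \<alpha>\<beta>: "\<alpha> \<in> {1..i}" "\<beta> \<in> {1..j}" "U \<alpha> \<beta> \<notin> Z"
    using tight_missing_vertex[OF tight] by blast
  have "discount k Z \<alpha> \<le> (real \<beta> - 1) / real k ^ 4"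
    using \<alpha>\<beta> j_bounds by (intro tight_discount_le[OF tight]) auto
  also have "\<dots> < g \<alpha>"
    using \<alpha>\<beta> k3 unfolding g_def by (simp add: divide_strict_right_mono)
  finally have "\<exists>a\<in>{1..<k}. discount k Z a < g a" using \<alpha>\<beta>(1) i_bounds by force
  thus "(\<Sum>a\<in>{1..<k}. discount k Z a) < real i * real j / real k ^ 4"
    unfolding g_sum[symmetric] using le_g by (intro sum_strict_mono_ex1) auto
qed

text \<open>Either the cut has at least i + j + 1 grid edges, and the
  small discounts cannot compensate the extra edge, or it is tight.\<close>
lemma light_cost_lower_bound:
  shows "cut_cost k Z \<ge> real i + real j - real i * real j / real k ^ 4"
    and "Z \<noteq> corner_cut i j \<Longrightarrow> cut_cost k Z > real i + real j - real i * real j / real k ^ 4"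
proof -
  define N where "N = (\<Sum>b\<in>{1..<k}. row_cuts k Z b) + (\<Sum>a\<in>{1..<k}. col_cuts k Z a)"
  define c where "c = real i + real j - real i * real j / real k ^ 4"
  have k1: "k \<ge> 1" using k3 by simp
  have cost: "cut_cost k Z = N - (\<Sum>a\<in>{1..<k}. discount k Z a)"
    unfolding light_cut_cost[OF Z_light k1] N_def by (simp add: sum_subtractf)
  have "cut_cost k Z \<ge> c \<and> (Z \<noteq> corner_cut i j \<longrightarrow> cut_cost k Z > c)"
  proof (cases "N \<le> i + j")
    case True
    have "N \<ge> real i + real j" using cut_counts_ge unfolding N_def by simp
    thus ?thesis using tight_discount_sum[OF True[unfolded N_def]] cost unfolding c_def by fastforce
  next
    case False
    have "N \<in> \<int>" unfolding N_def row_cuts_def col_cuts_def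
      by (intro Ints_add Ints_sum changes_Ints)
    then obtain n where n: "N = of_int n" by (auto elim: Ints_cases)
    hence "real_of_int (int i + int j) < real_of_int n" using False by simp
    hence "int i + int j + 1 \<le> n" unfolding of_int_less_iff by linarith
    hence N_ge: "N \<ge> real i + real j + 1" unfolding n
      using of_int_le_iff[of "int i + int j + 1" n, where 'a=real] by simp
    have gain: "real i + real j < (real i + real j + 1) * (1 - (real k - 1) / real k ^ 4)"
      using weight_bounds(2)[OF k3 i_bounds(2) j_bounds(2)] .
    hence "0 < (real i + real j + 1) * (1 - (real k - 1) / real k ^ 4)" by linarith
    hence weight_pos: "0 < 1 - (real k - 1) / real k ^ 4" by (simp add: zero_less_mult_iff)
    note gain
    also have "(real i + real j + 1) * (1 - (real k - 1) / real k ^ 4)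
        \<le> (1 - (real k - 1) / real k ^ 4) * N"
      using N_ge weight_pos by (simp add: mult.commute mult_left_mono)
    also have "\<dots> \<le> cut_cost k Z"
      using light_cut_cost_ge_count[OF Z_light k1] unfolding N_def .
    finally have "cut_cost k Z > real i + real j" .
    moreover have "real i * real j / real k ^ 4 \<ge> 0" by simp
    ultimately show ?thesis unfolding c_def by linarith
  qed
  thus "cut_cost k Z \<ge> real i + real j - real i * real j / real k ^ 4"
    and "Z \<noteq> corner_cut i j \<Longrightarrow> cut_cost k Z > real i + real j - real i * real j / real k ^ 4"
    unfolding c_def by auto
qed

end

lemma same_side_cost_gt:
  assumes "k \<ge> 3" "1 \<le> i" "i < k" "1 \<le> j" "j < k"
    and "Z \<subseteq> verts k" "Z \<inter> terminals k = Sij i j" "Z \<noteq> corner_cut i j"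
  shows "cut_cost k Z > cut_cost k (corner_cut i j)"
proof (cases "light k Z")
  case True
  thus ?thesis using light_cost_lower_bound(2)[OF assms(1-7) True assms(8)] corner_cut_cost assms(2-5)
    by simp
next
  case False
  have "real i * real j / real k ^ 4 \<ge> 0" by simp
  hence "real i + real j - real i * real j / real k ^ 4 < real k ^ 4"
    using weight_bounds(1)[OF assms(1,3,5)] by linarith
  thus ?thesis using heavy_cut_cost[OF False] corner_cut_cost assms(2-5) by simp
qed

theorem lemma3p7:
  fixes k i j :: nat
  assumes "k \<ge> 3" and "1 \<le> i" "i \<le> k - 1" and "1 \<le> j" "j \<le> k - 1"
  defines "W \<equiv> Sij i j \<union> {U \<alpha> \<beta> | \<alpha> \<beta>. 1 \<le> \<alpha> \<and> \<alpha> \<le> i \<and> 1 \<le> \<beta> \<and> \<beta> \<le> j}"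
  shows "separating k (Sij i j) W
    \<and> (\<forall>W'. separating k (Sij i j) W' \<and> W' \<noteq> W \<and> W' \<noteq> verts k - W
             \<longrightarrow> cut_cost k W' > cut_cost k W)
    \<and> cut_cost k W = real i + real j - (\<Sum>\<alpha> = 1..i. eps k \<alpha> j)"
proof -
  have bounds: "1 \<le> i" "i < k" "1 \<le> j" "j < k" using assms(1-5) by auto
  have W: "W = corner_cut i j" unfolding W_def corner_cut_def ..
  have W_side: "W \<subseteq> verts k" "W \<inter> terminals k = Sij i j"
    unfolding W using corner_cut_separating bounds by auto
  have optimal: "cut_cost k W' > cut_cost k W"
    if sep: "separating k (Sij i j) W'" and "W' \<noteq> W" "W' \<noteq> verts k - W" for W'
  proof -
    have W'_verts: "W' \<subseteq> verts k" using sep unfolding separating_def by blast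
    have "Sij i j \<subseteq> terminals k" "terminals k \<subseteq> verts k"
      using bounds unfolding Sij_def terminals_def verts_def by auto
    hence "W' \<inter> terminals k = Sij i j \<or> (verts k - W') \<inter> terminals k = Sij i j"
      using sep unfolding separating_def by blast
    moreover have "verts k - W' \<noteq> W" using that(3) W'_verts W_side by blast
    ultimately show ?thesis
      using same_side_cost_gt[OF assms(1) bounds] W'_verts that(2) cut_cost_compl[of k W']
      unfolding W by (metis Diff_subset)
  qed
  have "(\<Sum>\<alpha> = 1..i. eps k \<alpha> j) = real i * real j / real k ^ 4" by (simp add: eps_def)
  thus ?thesis using W_side optimal corner_cut_cost[OF bounds] unfolding separating_def W by auto
qed

end
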